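(* Let $S$ be a semigroup. If there is an element $a\in S$ with $a\in aS$ such that $\mathbf{r}_S(a)$ is finitely generated as a right congruence, then $S=US^1$ for some finite set $U\subseteq S$.
   Context: $S^1$ is $S$ if $S$ is a monoid and otherwise $S$ with an identity adjoined. $\mathbf{r}_S(a)=\{(s,t)\in S\times S\mid as=at\}$. A right congruence is finitely generated if it is the smallest right congruence containing some finite subset of $S\times S$. *)

theory Defs
  imports Main
begin

text \<open>The semigroup S is the universe of a type of class semigroup_mult.\<close>

definition right_congruence :: "('a::semigroup_mult \<times> 'a) set \<Rightarrow> bool" where
  "right_congruence \<rho> \<longleftrightarrow> equiv UNIV \<rho> \<and> (\<forall>s t u. (s, t) \<in> \<rho> \<longrightarrow> (s * u, t * u) \<in> \<rho>)"

definition right_cong_generated :: "('a::semigroup_mult \<times> 'a) set \<Rightarrow> ('a \<times> 'a) set" where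
  "right_cong_generated X = \<Inter>{\<sigma>. right_congruence \<sigma> \<and> X \<subseteq> \<sigma>}"

definition fin_gen_right_congruence :: "('a::semigroup_mult \<times> 'a) set \<Rightarrow> bool" where
  "fin_gen_right_congruence \<rho> \<longleftrightarrow> (\<exists>X. finite X \<and> \<rho> = right_cong_generated X)"

definition right_annihilator :: "'a::semigroup_mult \<Rightarrow> ('a \<times> 'a) set" where
  "right_annihilator a = {(s, t). a * s = a * t}"

text \<open>U S^1 = U \<union> U S (S^1 = S with identity adjoined if needed; in a monoid u = u*1 so this is U S).\<close>
definition times_S1 :: "'a::semigroup_mult set \<Rightarrow> 'a set" where
  "times_S1 U = U \<union> {u * s | u s. u \<in> U}"

end

theory Submission
  imports Defs
begin

text \<open>Let \<open>a = a e\<close> and let \<open>X\<close> be a finite generating set of \<open>r\<^sub>S(a)\<close>. The right ideal \<open>T = U S\<^sup>1\<close>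
  generated by \<open>e\<close> and the finitely many entries of \<open>X\<close> determines the Rees-type right congruence
  \<open>\<Delta> \<union> T \<times> T\<close>, which contains \<open>X\<close> and hence all of \<open>r\<^sub>S(a)\<close>. For every \<open>x\<close>, the pair \<open>(e x, x)\<close>
  lies in \<open>r\<^sub>S(a)\<close> and \<open>e x \<in> T\<close>, so \<open>x \<in> T\<close>.\<close>

lemma times_S1_mult_right:
  assumes "x \<in> times_S1 U"
  shows "x * u \<in> times_S1 U"
  using assms unfolding times_S1_def by (auto simp: mult.assoc) blast

lemma right_congruence_Rees:
  fixes T :: "'a::semigroup_mult set"
  assumes "\<And>x u. x \<in> T \<Longrightarrow> x * u \<in> T"
  shows "right_congruence (Id \<union> T \<times> T)"
  unfolding right_congruence_def equiv_def refl_on_def sym_def trans_def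
  using assms by blast

lemma right_cong_generated_least:
  assumes "right_congruence \<sigma>" and "X \<subseteq> \<sigma>"
  shows "right_cong_generated X \<subseteq> \<sigma>"
  using assms unfolding right_cong_generated_def by blast

lemma right_ideal_eq_UNIV_if_right_annihilator_Rees:
  fixes a e :: "'a::semigroup_mult"
  assumes "a = a * e" and "e \<in> T" and "\<And>x u. x \<in> T \<Longrightarrow> x * u \<in> T"
    and "right_annihilator a \<subseteq> Id \<union> T \<times> T"
  shows "T = UNIV"
proof (intro set_eqI iffI UNIV_I)
  fix x
  have "a * (e * x) = a * x"
    using assms(1) by (metis mult.assoc)
  then have "(e * x, x) \<in> Id \<union> T \<times> T"
    using assms(4) unfolding right_annihilator_def by blast
  moreover have "e * x \<in> T"
    using assms(2,3) by blast
  ultimately show "x \<in> T" by auto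
qed

theorem mainTheorem13:
  fixes a :: "'a::semigroup_mult"
  assumes "\<exists>s. a = a * s"
    and "fin_gen_right_congruence (right_annihilator a)"
  shows "\<exists>U. finite U \<and> (UNIV :: 'a set) = times_S1 U"
proof -
  obtain e where e: "a = a * e" using assms(1) by blast
  obtain X where X: "finite X" "right_annihilator a = right_cong_generated X"
    using assms(2) unfolding fin_gen_right_congruence_def by blast
  define U where "U = insert e (fst ` X \<union> snd ` X)"
  have ideal: "x \<in> times_S1 U \<Longrightarrow> x * u \<in> times_S1 U" for x u
    by (rule times_S1_mult_right)
  have "X \<subseteq> Id \<union> times_S1 U \<times> times_S1 U"
    unfolding U_def times_S1_def by force
  then have "right_annihilator a \<subseteq> Id \<union> times_S1 U \<times> times_S1 U"
    unfolding X(2) using right_cong_generated_least right_congruence_Rees ideal by blast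
  moreover have "e \<in> times_S1 U"
    unfolding U_def times_S1_def by blast
  ultimately have "times_S1 U = UNIV"
    using right_ideal_eq_UNIV_if_right_annihilator_Rees e ideal by blast
  moreover have "finite U"
    using X(1) unfolding U_def by simp
  ultimately show ?thesis by auto
qed

end
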